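(* Let $n\ge 2$ be an integer and $A\subseteq L_n$. If $(X_n,\tau(A))$ is $\sigma$-compact, then $(X_n,\tau(A))$ is second-countable.
   Context: For $\overline{x},\overline{a}\in\mathbb R^n$ let $|\overline{x}-\overline{a}|$ be the Euclidean distance and $B(\overline{a},\epsilon)=\{\overline{x}\in\mathbb R^n:|\overline{x}-\overline{a}|<\epsilon\}$. Let $P_n=\{\overline{x}\in\mathbb R^n: x_n>0\}$, $L_n=\{\overline{x}\in\mathbb R^n: x_n=0\}$, $X_n=P_n\cup L_n$. For $\overline{a}\in L_n$ and $\epsilon>0$ put $\overline{a(\epsilon)}=(a_1,\dots,a_{n-1},\epsilon)$ and $\tilde B(\overline{a},\epsilon)=\{\overline{a}\}\cup B(\overline{a(\epsilon)},\epsilon)$. For $A\subseteq L_n$, the topology $\tau(A)$ on $X_n$ is generated by the local bases: at $\overline{a}\in P_n$, the sets $B(\overline{a},\epsilon)$ with $0<\epsilon<a_n$; at $\overline{a}\in A$, the sets $B(\overline{a},\epsilon)\cap X_n$ with $\epsilon>0$; at $\overline{a}\in L_n\setminus A$, the sets $\tilde B(\overline{a},\epsilon)$ with $\epsilon>0$. *)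

theory Defs
  imports "HOL-Analysis.Analysis"
begin

text \<open>Points of R^n are represented as functions nat => real vanishing at indices >= n;
  coordinate x_i of the paper (1 <= i <= n) is x (i - 1). In particular x_n is x (n - 1).\<close>

definition Rn :: "nat \<Rightarrow> (nat \<Rightarrow> real) set" where
  "Rn n = {x. \<forall>i\<ge>n. x i = 0}"

definition edist :: "nat \<Rightarrow> (nat \<Rightarrow> real) \<Rightarrow> (nat \<Rightarrow> real) \<Rightarrow> real" where
  "edist n x a = sqrt (\<Sum>i<n. (x i - a i)^2)"

definition Ball_n :: "nat \<Rightarrow> (nat \<Rightarrow> real) \<Rightarrow> real \<Rightarrow> (nat \<Rightarrow> real) set" where
  "Ball_n n a e = {x \<in> Rn n. edist n x a < e}"

definition Pn :: "nat \<Rightarrow> (nat \<Rightarrow> real) set" where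
  "Pn n = {x \<in> Rn n. x (n - 1) > 0}"

definition Ln :: "nat \<Rightarrow> (nat \<Rightarrow> real) set" where
  "Ln n = {x \<in> Rn n. x (n - 1) = 0}"

definition Xn :: "nat \<Rightarrow> (nat \<Rightarrow> real) set" where
  "Xn n = Pn n \<union> Ln n"

definition lift_pt :: "nat \<Rightarrow> (nat \<Rightarrow> real) \<Rightarrow> real \<Rightarrow> (nat \<Rightarrow> real)" where
  "lift_pt n a e = a((n - 1) := e)"

definition tildeBall :: "nat \<Rightarrow> (nat \<Rightarrow> real) \<Rightarrow> real \<Rightarrow> (nat \<Rightarrow> real) set" where
  "tildeBall n a e = {a} \<union> Ball_n n (lift_pt n a e) e"

text \<open>The union of all the local bases; tau(A) is the topology generated by it.\<close>
definition nbhd_sets :: "nat \<Rightarrow> (nat \<Rightarrow> real) set \<Rightarrow> (nat \<Rightarrow> real) set set" where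
  "nbhd_sets n A =
     {Ball_n n a e | a e. a \<in> Pn n \<and> 0 < e \<and> e < a (n - 1)}
   \<union> {Ball_n n a e \<inter> Xn n | a e. a \<in> A \<and> 0 < e}
   \<union> {tildeBall n a e | a e. a \<in> Ln n - A \<and> 0 < e}"

definition tau :: "nat \<Rightarrow> (nat \<Rightarrow> real) set \<Rightarrow> (nat \<Rightarrow> real) topology" where
  "tau n A = topology_generated_by (nbhd_sets n A)"

definition sigma_compact_space :: "'a topology \<Rightarrow> bool" where
  "sigma_compact_space X \<longleftrightarrow>
     (\<exists>\<K>. countable \<K> \<and> (\<forall>K\<in>\<K>. compactin X K) \<and> \<Union>\<K> = topspace X)"

end

theory Submission
  imports Defs
begin

text \<open>A point d of L_n - A is isolated in L_n, since tilde-B(d, r) meets L_n only in d.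
  If K is compact, then so is K \<inter> A (A is closed), hence every d \<in> K \<inter> (L_n - A) has
  positive Euclidean distance from K \<inter> A. For fixed r > 0, the points of K \<inter> (L_n - A) at
  distance at least r from K \<inter> A are finite in number: K is covered by P_n, the
  r-neighbourhood of K \<inter> A and the sets tilde-B(d, 1), and each of these contains at most
  one such point. So K meets L_n - A in a countable set, and sigma-compactness makes
  L_n - A countable. Balls with rational centres and radii, together with the sets
  tilde-B(d, r) for d \<in> L_n - A and rational r > 0, then form a countable base.\<close>

lemma edist_eq_L2_set: "edist n x y = L2_set (\<lambda>i. x i - y i) {..<n}"
  by (simp add: edist_def L2_set_def)

lemma edist_commute: "edist n x y = edist n y x"
  unfolding edist_def by (simp add: power2_commute)

lemma edist_self [simp]: "edist n x x = 0"
  unfolding edist_def by simp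

lemma edist_triangle: "edist n x z \<le> edist n x y + edist n y z"
proof -
  have "edist n x z = L2_set (\<lambda>i. (x i - y i) + (y i - z i)) {..<n}"
    unfolding edist_eq_L2_set by simp
  also have "\<dots> \<le> edist n x y + edist n y z"
    unfolding edist_eq_L2_set by (rule L2_set_triangle_ineq)
  finally show ?thesis .
qed

lemma abs_coord_le_edist:
  assumes "i < n"
  shows "\<bar>x i - y i\<bar> \<le> edist n x y"
proof -
  have "\<bar>x i - y i\<bar> \<le> L2_set (\<lambda>i. \<bar>x i - y i\<bar>) {..<n}"
    by (rule member_le_L2_set) (use assms in auto)
  then show ?thesis
    by (simp add: edist_eq_L2_set L2_set_def)
qed

lemma edist_le_sum_abs: "edist n x y \<le> (\<Sum>i<n. \<bar>x i - y i\<bar>)"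
  unfolding edist_eq_L2_set by (rule L2_set_le_sum_abs)

lemma edist_single_coord:
  assumes "x \<in> Rn n" "y \<in> Rn n" "j < n" "\<And>i. i \<noteq> j \<Longrightarrow> x i = y i"
  shows "edist n x y = \<bar>x j - y j\<bar>"
proof -
  have "(\<Sum>i<n. (x i - y i)\<^sup>2) = (\<Sum>i\<in>{j}. (x i - y i)\<^sup>2)"
    by (rule sum.mono_neutral_right) (use assms in auto)
  then show ?thesis
    unfolding edist_def by simp
qed

lemma zero_less_edist:
  assumes "x \<in> Rn n" "y \<in> Rn n" "x \<noteq> y"
  shows "0 < edist n x y"
proof -
  obtain i where i: "x i \<noteq> y i"
    using assms(3) by auto
  have "i < n"
    using i assms(1,2) unfolding Rn_def by (metis (mono_tags) mem_Collect_eq not_le)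
  then have "\<bar>x i - y i\<bar> \<le> edist n x y"
    by (rule abs_coord_le_edist)
  with i show ?thesis
    by auto
qed

definition rat_points :: "nat \<Rightarrow> (nat \<Rightarrow> real) set" where
  "rat_points n = {q \<in> Rn n. \<forall>i. q i \<in> \<rat>}"

lemma countable_rat_points: "countable (rat_points n)"
proof -
  define extend :: "(nat \<Rightarrow> real) \<Rightarrow> nat \<Rightarrow> real"
    where "extend f i = (if i < n then f i else 0)" for f i
  have "rat_points n \<subseteq> extend ` (PiE {..<n} (\<lambda>_. \<rat>))"
  proof
    fix q
    assume q: "q \<in> rat_points n"
    then have "q = extend (restrict q {..<n})"
      by (auto simp: extend_def rat_points_def Rn_def fun_eq_iff)
    moreover have "restrict q {..<n} \<in> PiE {..<n} (\<lambda>_. \<rat>)"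
      using q by (auto simp: rat_points_def)
    ultimately show "q \<in> extend ` (PiE {..<n} (\<lambda>_. \<rat>))" ..
  qed
  moreover have "countable (extend ` (PiE {..<n} (\<lambda>_. \<rat>)))"
    by (intro countable_image countable_PiE) (auto simp: countable_rat)
  ultimately show ?thesis
    by (rule countable_subset)
qed

lemma rat_points_dense:
  assumes "x \<in> Rn n" "0 < e"
  obtains q where "q \<in> rat_points n" "edist n x q < e"
proof -
  define c where "c = e / (real n + 1)"
  have "0 < c"
    using assms(2) by (simp add: c_def)
  then have "\<forall>i. \<exists>r\<in>\<rat>. x i < r \<and> r < x i + c"
    by (auto intro: Rats_dense_in_real)
  then obtain r where r: "\<And>i. r i \<in> \<rat> \<and> x i < r i \<and> r i < x i + c"
    by metis
  have r_close: "\<bar>x i - r i\<bar> \<le> c" for i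
    using r[of i] by (simp add: abs_le_iff less_imp_le)
  define q where "q i = (if i < n then r i else 0)" for i
  have "q \<in> rat_points n"
    using r by (simp add: q_def rat_points_def Rn_def)
  moreover have "edist n x q < e"
  proof -
    have "edist n x q \<le> (\<Sum>i<n. \<bar>x i - q i\<bar>)"
      by (rule edist_le_sum_abs)
    also have "\<dots> \<le> (\<Sum>i<n. c)"
      using r_close by (intro sum_mono) (simp add: q_def)
    also have "\<dots> < e"
      using assms(2) by (simp add: c_def field_simps)
    finally show ?thesis .
  qed
  ultimately show ?thesis
    by (rule that)
qed

lemma rat_Ball_n_between:
  assumes "x \<in> Rn n" "0 < e"
  obtains q r where "q \<in> rat_points n" "r \<in> \<rat>" "x \<in> Ball_n n q r" "Ball_n n q r \<subseteq> Ball_n n x e"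
proof -
  obtain q where q: "q \<in> rat_points n" "edist n x q < e / 3"
    using rat_points_dense[OF assms(1), of "e / 3"] assms(2) by auto
  obtain r where r: "r \<in> \<rat>" "e / 3 < r" "r < e / 2"
    using Rats_dense_in_real[of "e / 3" "e / 2"] assms(2) by auto
  have "x \<in> Ball_n n q r"
    using assms(1) q r by (simp add: Ball_n_def edist_commute)
  moreover have "Ball_n n q r \<subseteq> Ball_n n x e"
  proof
    fix y
    assume y: "y \<in> Ball_n n q r"
    have "edist n y x \<le> edist n y q + edist n q x"
      by (rule edist_triangle)
    also have "\<dots> < e"
      using y q(2) r(3) assms(2) edist_commute[of n q x] unfolding Ball_n_def by auto
    finally show "y \<in> Ball_n n x e"
      using y by (simp add: Ball_n_def)
  qed
  ultimately show ?thesis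
    using q r that by blast
qed

lemma finite_subset_of_compactin:
  assumes "compactin X K" "D \<subseteq> K" "\<forall>U\<in>\<U>. openin X U" "K \<subseteq> \<Union>\<U>"
    and "\<forall>U\<in>\<U>. finite (U \<inter> D)"
  shows "finite D"
proof -
  obtain \<F> where \<F>: "finite \<F>" "\<F> \<subseteq> \<U>" "K \<subseteq> \<Union>\<F>"
    using assms(1,3,4) unfolding compactin_def by meson
  have "D \<subseteq> (\<Union>U\<in>\<F>. U \<inter> D)"
    using assms(2) \<F>(3) by blast
  moreover have "finite (\<Union>U\<in>\<F>. U \<inter> D)"
    using \<F>(1,2) assms(5) by blast
  ultimately show ?thesis
    by (rule finite_subset)
qed

lemma Pn_subset_Xn: "Pn n \<subseteq> Xn n" and Ln_subset_Xn: "Ln n \<subseteq> Xn n"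
  by (auto simp: Xn_def)

context
  fixes n :: nat
  assumes n_pos: "0 < n"
begin

lemma last_coord_less: "n - 1 < n"
  using n_pos by simp

lemma lift_pt_in_Rn: "a \<in> Rn n \<Longrightarrow> lift_pt n a e \<in> Rn n"
  using last_coord_less by (auto simp: Rn_def lift_pt_def)

lemma Ball_n_subset_Pn:
  assumes "r \<le> c (n - 1)"
  shows "Ball_n n c r \<subseteq> Pn n"
proof
  fix y
  assume y: "y \<in> Ball_n n c r"
  have "\<bar>y (n - 1) - c (n - 1)\<bar> \<le> edist n y c"
    using last_coord_less by (rule abs_coord_le_edist)
  with y assms show "y \<in> Pn n"
    by (auto simp: Ball_n_def Pn_def)
qed

lemma Ball_n_lift_pt_subset_Pn: "Ball_n n (lift_pt n a e) e \<subseteq> Pn n"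
  by (rule Ball_n_subset_Pn) (simp add: lift_pt_def)

lemma edist_lift_pt:
  assumes "a \<in> Rn n"
  shows "edist n (lift_pt n a d) (lift_pt n a e) = \<bar>d - e\<bar>"
  using edist_single_coord[OF lift_pt_in_Rn[OF assms] lift_pt_in_Rn[OF assms] last_coord_less]
  by (simp add: lift_pt_def)

lemma edist_lift_pt_Ln:
  assumes "a \<in> Ln n"
  shows "edist n a (lift_pt n a e) = \<bar>e\<bar>"
proof -
  have "a \<in> Rn n" "a (n - 1) = 0"
    using assms by (auto simp: Ln_def)
  then show ?thesis
    using edist_single_coord[OF _ lift_pt_in_Rn last_coord_less, of a a e]
    by (simp add: lift_pt_def)
qed

lemma tildeBall_subset_Ball_n:
  assumes "a \<in> Ln n" "0 < e"
  shows "tildeBall n a e \<subseteq> Ball_n n a (2 * e) \<inter> Xn n"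
proof
  fix y
  assume y: "y \<in> tildeBall n a e"
  show "y \<in> Ball_n n a (2 * e) \<inter> Xn n"
  proof (cases "y = a")
    case True
    with assms show ?thesis
      by (auto simp: Ball_n_def Ln_def Xn_def)
  next
    case False
    with y have y_ball: "y \<in> Ball_n n (lift_pt n a e) e"
      by (auto simp: tildeBall_def)
    have "edist n y a \<le> edist n y (lift_pt n a e) + edist n (lift_pt n a e) a"
      by (rule edist_triangle)
    also have "\<dots> < 2 * e"
      using y_ball edist_lift_pt_Ln[OF assms(1), of e] assms(2)
      by (auto simp: Ball_n_def edist_commute)
    finally show ?thesis
      using y_ball Ball_n_lift_pt_subset_Pn Pn_subset_Xn[of n] by (auto simp: Ball_n_def)
  qed
qed

lemma tildeBall_mono:
  assumes "a \<in> Ln n" "0 < d" "d \<le> e"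
  shows "tildeBall n a d \<subseteq> tildeBall n a e"
proof
  fix y
  assume y: "y \<in> tildeBall n a d"
  show "y \<in> tildeBall n a e"
  proof (cases "y = a")
    case True
    then show ?thesis
      by (simp add: tildeBall_def)
  next
    case False
    with y have y_ball: "y \<in> Ball_n n (lift_pt n a d) d"
      by (auto simp: tildeBall_def)
    have "a \<in> Rn n"
      using assms(1) by (simp add: Ln_def)
    have "edist n y (lift_pt n a e) \<le> edist n y (lift_pt n a d) + edist n (lift_pt n a d) (lift_pt n a e)"
      by (rule edist_triangle)
    also have "\<dots> < e"
      using y_ball edist_lift_pt[OF \<open>a \<in> Rn n\<close>, of d e] assms by (auto simp: Ball_n_def)
    finally show ?thesis
      using y_ball by (auto simp: Ball_n_def tildeBall_def)
  qed
qed

lemma tildeBall_Int_Ln: "tildeBall n a e \<inter> Ln n \<subseteq> {a}"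
  using Ball_n_lift_pt_subset_Pn[of a e] by (auto simp: tildeBall_def Ln_def Pn_def)

context
  fixes A :: "(nat \<Rightarrow> real) set"
  assumes A_subset: "A \<subseteq> Ln n"
begin

text \<open>One member of the local base at x for each radius e, monotone in e; the cap x_n / 2
  meets the constraint e < x_n imposed on balls around points of P_n.\<close>

definition basic_nbhd :: "(nat \<Rightarrow> real) \<Rightarrow> real \<Rightarrow> (nat \<Rightarrow> real) set" where
  "basic_nbhd x e =
     (if x \<in> Pn n then Ball_n n x (min e (x (n - 1) / 2))
      else if x \<in> A then Ball_n n x e \<inter> Xn n
      else tildeBall n x e)"

lemma Xn_cases [consumes 1, case_names Pn A L]:
  assumes "x \<in> Xn n"
  obtains "x \<in> Pn n" | "x \<in> A" "x \<notin> Pn n" | "x \<in> Ln n - A" "x \<notin> Pn n"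
  using assms unfolding Xn_def by blast

lemma basic_nbhd_in_nbhd_sets:
  assumes "x \<in> Xn n" "0 < e"
  shows "basic_nbhd x e \<in> nbhd_sets n A"
  using assms(1)
proof (cases rule: Xn_cases)
  case Pn
  then have "0 < min e (x (n - 1) / 2)" "min e (x (n - 1) / 2) < x (n - 1)"
    using assms(2) by (auto simp: Pn_def)
  with Pn show ?thesis
    unfolding nbhd_sets_def basic_nbhd_def by auto
next
  case A
  with assms(2) show ?thesis
    unfolding nbhd_sets_def basic_nbhd_def by auto
next
  case L
  with assms(2) show ?thesis
    unfolding nbhd_sets_def basic_nbhd_def by auto
qed

lemma centre_in_basic_nbhd:
  assumes "x \<in> Xn n" "0 < e"
  shows "x \<in> basic_nbhd x e"
  using assms by (auto simp: basic_nbhd_def Ball_n_def tildeBall_def Xn_def Pn_def Ln_def)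

lemma basic_nbhd_subset_Ball_n:
  assumes "x \<in> Xn n" "0 < e"
  shows "basic_nbhd x e \<subseteq> Ball_n n x (2 * e) \<inter> Xn n"
  using assms(1)
proof (cases rule: Xn_cases)
  case Pn
  then have "Ball_n n x (min e (x (n - 1) / 2)) \<subseteq> Pn n"
    by (intro Ball_n_subset_Pn) (auto simp: Pn_def)
  with Pn assms(2) Pn_subset_Xn[of n] show ?thesis
    by (auto simp: basic_nbhd_def Ball_n_def)
next
  case A
  with assms(2) show ?thesis
    by (auto simp: basic_nbhd_def Ball_n_def)
next
  case L
  with assms(2) tildeBall_subset_Ball_n show ?thesis
    by (auto simp: basic_nbhd_def)
qed

lemma basic_nbhd_mono:
  assumes "x \<in> Xn n" "0 < d" "d \<le> e"
  shows "basic_nbhd x d \<subseteq> basic_nbhd x e"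
  using assms(1)
proof (cases rule: Xn_cases)
  case Pn
  with assms show ?thesis
    by (auto simp: basic_nbhd_def Ball_n_def)
next
  case A
  with assms show ?thesis
    by (auto simp: basic_nbhd_def Ball_n_def)
next
  case L
  with assms tildeBall_mono show ?thesis
    by (auto simp: basic_nbhd_def)
qed

lemma basic_nbhd_subset_Ball_n_Int_Xn:
  assumes "x \<in> Ball_n n c r" "x \<in> Xn n"
  shows "\<exists>e>0. basic_nbhd x e \<subseteq> Ball_n n c r \<inter> Xn n"
proof -
  define e where "e = (r - edist n x c) / 2"
  have "0 < e"
    using assms(1) by (simp add: e_def Ball_n_def)
  moreover have "basic_nbhd x e \<subseteq> Ball_n n c r \<inter> Xn n"
  proof
    fix y
    assume "y \<in> basic_nbhd x e"
    moreover have "2 * e = r - edist n x c"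
      by (simp add: e_def)
    ultimately have y: "y \<in> Ball_n n x (r - edist n x c) \<inter> Xn n"
      using basic_nbhd_subset_Ball_n[OF assms(2) \<open>0 < e\<close>] by auto
    have "edist n y c \<le> edist n y x + edist n x c"
      by (rule edist_triangle)
    also have "\<dots> < r"
      using y by (simp add: Ball_n_def)
    finally show "y \<in> Ball_n n c r \<inter> Xn n"
      using y by (simp add: Ball_n_def)
  qed
  ultimately show ?thesis
    by blast
qed

lemma nbhd_sets_cases [consumes 1]:
  assumes "N \<in> nbhd_sets n A"
  obtains (Pn) a e where "N = Ball_n n a e" "a \<in> Pn n" "e < a (n - 1)"
    | (A) a e where "N = Ball_n n a e \<inter> Xn n"
    | (L) a e where "N = tildeBall n a e" "a \<in> Ln n - A" "0 < e"
  using assms unfolding nbhd_sets_def by blast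

lemma nbhd_sets_subset_Xn:
  assumes "N \<in> nbhd_sets n A"
  shows "N \<subseteq> Xn n"
  using assms
proof (cases rule: nbhd_sets_cases)
  case (Pn a e)
  then show ?thesis
    using Ball_n_subset_Pn[of e a] Pn_subset_Xn[of n] by auto
next
  case (A a e)
  then show ?thesis
    by auto
next
  case (L a e)
  then show ?thesis
    using tildeBall_subset_Ball_n by auto
qed

lemma nbhd_sets_contain_basic_nbhd:
  assumes "N \<in> nbhd_sets n A" "x \<in> N"
  shows "\<exists>e>0. basic_nbhd x e \<subseteq> N"
proof -
  have "x \<in> Xn n"
    using nbhd_sets_subset_Xn assms by auto
  from assms(1) show ?thesis
  proof (cases rule: nbhd_sets_cases)
    case (Pn a e)
    then have "N = Ball_n n a e \<inter> Xn n"
      using nbhd_sets_subset_Xn[OF assms(1)] by auto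
    with assms(2) \<open>x \<in> Xn n\<close> show ?thesis
      using basic_nbhd_subset_Ball_n_Int_Xn by auto
  next
    case (A a e)
    with assms(2) \<open>x \<in> Xn n\<close> show ?thesis
      using basic_nbhd_subset_Ball_n_Int_Xn by auto
  next
    case (L a e)
    show ?thesis
    proof (cases "x = a")
      case True
      with L have "basic_nbhd x e = N"
        by (auto simp: basic_nbhd_def Ln_def Pn_def)
      with L show ?thesis
        by auto
    next
      case False
      with L assms(2) have "x \<in> Ball_n n (lift_pt n a e) e"
        by (auto simp: tildeBall_def)
      moreover have "Ball_n n (lift_pt n a e) e \<subseteq> N"
        using L by (auto simp: tildeBall_def)
      ultimately show ?thesis
        using basic_nbhd_subset_Ball_n_Int_Xn[OF _ \<open>x \<in> Xn n\<close>] by blast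
    qed
  qed
qed

lemma generate_topology_on_nbhd_sets_imp:
  assumes "generate_topology_on (nbhd_sets n A) U"
  shows "U \<subseteq> Xn n \<and> (\<forall>x\<in>U. \<exists>e>0. basic_nbhd x e \<subseteq> U)"
  using assms
proof (induction rule: generate_topology_on.induct)
  case Empty
  then show ?case
    by simp
next
  case (Int U V)
  have "\<exists>e>0. basic_nbhd x e \<subseteq> U \<inter> V" if x: "x \<in> U \<inter> V" for x
  proof -
    obtain d e where "0 < d" "basic_nbhd x d \<subseteq> U" "0 < e" "basic_nbhd x e \<subseteq> V"
      using Int.IH x by blast
    moreover have "x \<in> Xn n"
      using Int.IH x by blast
    ultimately have "basic_nbhd x (min d e) \<subseteq> U \<inter> V"
      using basic_nbhd_mono[of x "min d e" d] basic_nbhd_mono[of x "min d e" e] by auto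
    with \<open>0 < d\<close> \<open>0 < e\<close> show ?thesis
      by (intro exI[of _ "min d e"]) auto
  qed
  with Int.IH show ?case
    by blast
next
  case (UN K)
  then show ?case
    by blast
next
  case (Basis N)
  then show ?case
    using nbhd_sets_subset_Xn nbhd_sets_contain_basic_nbhd by blast
qed

lemma openin_tau_iff:
  "openin (tau n A) U \<longleftrightarrow> U \<subseteq> Xn n \<and> (\<forall>x\<in>U. \<exists>e>0. basic_nbhd x e \<subseteq> U)"
proof
  assume "openin (tau n A) U"
  then show "U \<subseteq> Xn n \<and> (\<forall>x\<in>U. \<exists>e>0. basic_nbhd x e \<subseteq> U)"
    unfolding tau_def openin_topology_generated_by_iff
    by (rule generate_topology_on_nbhd_sets_imp)
next
  assume U: "U \<subseteq> Xn n \<and> (\<forall>x\<in>U. \<exists>e>0. basic_nbhd x e \<subseteq> U)"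
  then obtain f where f: "\<And>x. x \<in> U \<Longrightarrow> 0 < f x \<and> basic_nbhd x (f x) \<subseteq> U"
    by metis
  have "U = (\<Union>x\<in>U. basic_nbhd x (f x))"
    using f U centre_in_basic_nbhd by blast
  moreover have "generate_topology_on (nbhd_sets n A) (basic_nbhd x (f x))" if "x \<in> U" for x
    using f[OF that] U that by (auto intro!: generate_topology_on.Basis basic_nbhd_in_nbhd_sets)
  then have "generate_topology_on (nbhd_sets n A) (\<Union>x\<in>U. basic_nbhd x (f x))"
    by (auto intro: generate_topology_on.UN)
  ultimately show "openin (tau n A) U"
    unfolding tau_def openin_topology_generated_by_iff by simp
qed

lemma openin_basic_nbhd: "x \<in> Xn n \<Longrightarrow> 0 < e \<Longrightarrow> openin (tau n A) (basic_nbhd x e)"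
  unfolding tau_def openin_topology_generated_by_iff
  by (intro generate_topology_on.Basis basic_nbhd_in_nbhd_sets)

lemma openin_tildeBall: "a \<in> Ln n - A \<Longrightarrow> 0 < e \<Longrightarrow> openin (tau n A) (tildeBall n a e)"
  using openin_basic_nbhd[of a e] by (simp add: basic_nbhd_def Xn_def Ln_def Pn_def)

lemma openin_Ball_n_Int_Xn: "openin (tau n A) (Ball_n n c r \<inter> Xn n)"
  unfolding openin_tau_iff using basic_nbhd_subset_Ball_n_Int_Xn by blast

lemma topspace_tau: "topspace (tau n A) = Xn n"
proof -
  have "openin (tau n A) (Xn n)"
    unfolding openin_tau_iff using basic_nbhd_subset_Ball_n[of _ 1] zero_less_one by blast
  then show ?thesis
    using openin_subset openin_tau_iff openin_topspace by blast
qed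

lemma openin_Pn: "openin (tau n A) (Pn n)"
  unfolding openin_tau_iff
proof (intro conjI ballI)
  fix x
  assume "x \<in> Pn n"
  then have "min 1 (x (n - 1) / 2) \<le> x (n - 1)"
    by (auto simp: Pn_def min_le_iff_disj)
  with \<open>x \<in> Pn n\<close> have "basic_nbhd x 1 \<subseteq> Pn n"
    using Ball_n_subset_Pn by (simp add: basic_nbhd_def)
  then show "\<exists>e>0. basic_nbhd x e \<subseteq> Pn n"
    by (intro exI[of _ 1]) auto
qed (rule Pn_subset_Xn[of n])

lemma closedin_A: "closedin (tau n A) A"
proof -
  have "openin (tau n A) (Xn n - A)"
    unfolding openin_tau_iff
  proof (intro conjI ballI)
    fix x
    assume x: "x \<in> Xn n - A"
    show "\<exists>e>0. basic_nbhd x e \<subseteq> Xn n - A"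
    proof (cases "x \<in> Pn n")
      case True
      then obtain e where "0 < e" "basic_nbhd x e \<subseteq> Pn n"
        using openin_Pn openin_tau_iff by blast
      moreover have "Pn n \<inter> A = {}"
        using A_subset by (auto simp: Pn_def Ln_def)
      ultimately show ?thesis
        using Pn_subset_Xn[of n] by blast
    next
      case False
      with x have "x \<in> Ln n - A" "basic_nbhd x 1 = tildeBall n x 1"
        by (auto simp: basic_nbhd_def Xn_def)
      moreover have "tildeBall n x 1 \<inter> A = {}"
        using tildeBall_Int_Ln[of x 1] A_subset \<open>x \<in> Ln n - A\<close> by auto
      ultimately show ?thesis
        using tildeBall_subset_Ball_n[of x 1] by (intro exI[of _ 1]) auto
    qed
  qed auto
  moreover have "A \<subseteq> Xn n"
    using A_subset Ln_subset_Xn[of n] by blast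
  ultimately show ?thesis
    by (simp add: closedin_def topspace_tau)
qed

lemma continuous_map_edist: "continuous_map (tau n A) euclideanreal (\<lambda>y. edist n y c)"
  unfolding continuous_map topspace_tau
proof (intro conjI allI impI)
  fix V :: "real set"
  assume "openin euclideanreal V"
  then have "open V"
    by simp
  show "openin (tau n A) {x \<in> Xn n. edist n x c \<in> V}"
    unfolding openin_tau_iff
  proof (intro conjI ballI)
    fix x
    assume x: "x \<in> {x \<in> Xn n. edist n x c \<in> V}"
    then obtain e where "0 < e" and e: "ball (edist n x c) e \<subseteq> V"
      using \<open>open V\<close> open_contains_ball by blast
    have "basic_nbhd x (e / 2) \<subseteq> {x \<in> Xn n. edist n x c \<in> V}"
    proof
      fix y
      assume "y \<in> basic_nbhd x (e / 2)"
      then have y: "y \<in> Xn n" "edist n y x < e"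
        using basic_nbhd_subset_Ball_n[of x "e / 2"] x \<open>0 < e\<close> by (auto simp: Ball_n_def)
      have "edist n y c \<le> edist n y x + edist n x c" "edist n x c \<le> edist n x y + edist n y c"
        by (rule edist_triangle)+
      then have "edist n y c \<in> ball (edist n x c) e"
        using y(2) edist_commute[of n x y] by (simp add: dist_real_def)
      with e y(1) show "y \<in> {x \<in> Xn n. edist n x c \<in> V}"
        by blast
    qed
    with \<open>0 < e\<close> show "\<exists>e>0. basic_nbhd x e \<subseteq> {x \<in> Xn n. edist n x c \<in> V}"
      using half_gt_zero by blast
  qed auto
qed auto

lemma compactin_Int_A_dist_bounded_below:
  assumes "compactin (tau n A) K" "d \<in> Ln n - A"
  obtains r where "0 < r" "\<And>a. a \<in> K \<inter> A \<Longrightarrow> r \<le> edist n d a"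
proof (cases "K \<inter> A = {}")
  case True
  show ?thesis
    by (rule that[of 1]) (use True in auto)
next
  case False
  have "compactin (tau n A) (A \<inter> K)"
    using closedin_A assms(1) by (rule closed_Int_compactin)
  then have "compactin euclideanreal ((\<lambda>a. edist n a d) ` (A \<inter> K))"
    using continuous_map_edist by (rule image_compactin)
  then have "\<exists>s\<in>(\<lambda>a. edist n a d) ` (A \<inter> K). \<forall>t\<in>(\<lambda>a. edist n a d) ` (A \<inter> K). s \<le> t"
    using False by (intro compact_attains_inf) auto
  then obtain a0 where a0: "a0 \<in> K \<inter> A" "\<And>a. a \<in> K \<inter> A \<Longrightarrow> edist n a0 d \<le> edist n a d"
    by blast
  have "a0 \<in> Rn n" "d \<in> Rn n" "a0 \<noteq> d"
    using a0(1) assms(2) A_subset by (auto simp: Ln_def)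
  then have "0 < edist n a0 d"
    by (rule zero_less_edist)
  show ?thesis
  proof (rule that)
    show "0 < edist n a0 d"
      by fact
    show "edist n a0 d \<le> edist n d a" if "a \<in> K \<inter> A" for a
      using a0(2)[OF that] by (simp add: edist_commute)
  qed
qed

lemma subset_cover_Pn_Ball_n_tildeBall:
  assumes "S \<subseteq> Xn n" "0 < r"
  shows "S \<subseteq> Pn n \<union> (\<Union>a\<in>S \<inter> A. Ball_n n a r \<inter> Xn n) \<union> (\<Union>d\<in>Ln n - A. tildeBall n d 1)"
proof
  fix y
  assume "y \<in> S"
  with assms(1) consider "y \<in> Pn n" | "y \<in> A" | "y \<in> Ln n - A"
    by (auto simp: Xn_def)
  then show "y \<in> Pn n \<union> (\<Union>a\<in>S \<inter> A. Ball_n n a r \<inter> Xn n) \<union> (\<Union>d\<in>Ln n - A. tildeBall n d 1)"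
  proof cases
    case 2
    with \<open>y \<in> S\<close> A_subset assms(2) have "y \<in> Ball_n n y r \<inter> Xn n"
      by (auto simp: Ball_n_def Ln_def Xn_def)
    with \<open>y \<in> S\<close> 2 show ?thesis
      by blast
  next
    case 3
    then have "y \<in> tildeBall n y 1"
      by (simp add: tildeBall_def)
    with 3 show ?thesis
      by blast
  qed blast
qed

lemma finite_far_points:
  assumes K: "compactin (tau n A) K" and "0 < r"
  shows "finite {d \<in> K \<inter> (Ln n - A). \<forall>a\<in>K \<inter> A. r \<le> edist n d a}" (is "finite ?D")
proof -
  define U where "U = (\<Union>a\<in>K \<inter> A. Ball_n n a r \<inter> Xn n)"
  have "K \<subseteq> Xn n"
    using K compactin_subset_topspace topspace_tau by metis
  have "openin (tau n A) U"
    unfolding U_def by (rule openin_Union) (use openin_Ball_n_Int_Xn in blast)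
  show ?thesis
  proof (rule finite_subset_of_compactin[OF K])
    show "?D \<subseteq> K"
      by blast
    show "\<forall>V\<in>{Pn n, U} \<union> (\<lambda>d. tildeBall n d 1) ` (Ln n - A). openin (tau n A) V"
      using \<open>openin (tau n A) U\<close> openin_Pn openin_tildeBall by auto
    show "K \<subseteq> \<Union>({Pn n, U} \<union> (\<lambda>d. tildeBall n d 1) ` (Ln n - A))"
      using subset_cover_Pn_Ball_n_tildeBall[OF \<open>K \<subseteq> Xn n\<close> \<open>0 < r\<close>]
      by (simp add: U_def Un_assoc)
    have "Pn n \<inter> ?D = {}"
      by (auto simp: Pn_def Ln_def)
    moreover have "U \<inter> ?D = {}"
    proof (rule equals0I)
      fix y
      assume "y \<in> U \<inter> ?D"
      then obtain a where "edist n y a < r" "r \<le> edist n y a"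
        unfolding U_def Ball_n_def by blast
      then show False
        by simp
    qed
    moreover have "finite (tildeBall n d 1 \<inter> ?D)" for d
    proof (rule finite_subset)
      show "tildeBall n d 1 \<inter> ?D \<subseteq> {d}"
        using tildeBall_Int_Ln[of d 1] by blast
    qed simp
    ultimately show "\<forall>V\<in>{Pn n, U} \<union> (\<lambda>d. tildeBall n d 1) ` (Ln n - A). finite (V \<inter> ?D)"
      by auto
  qed
qed

lemma countable_compactin_Int_Ln_minus_A:
  assumes K: "compactin (tau n A) K"
  shows "countable (K \<inter> (Ln n - A))"
proof -
  let ?D = "\<lambda>r. {d \<in> K \<inter> (Ln n - A). \<forall>a\<in>K \<inter> A. r \<le> edist n d a}"
  have "K \<inter> (Ln n - A) \<subseteq> (\<Union>r\<in>\<rat> \<inter> {0<..}. ?D r)"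
  proof
    fix d
    assume d: "d \<in> K \<inter> (Ln n - A)"
    then obtain r0 where "0 < r0" "\<And>a. a \<in> K \<inter> A \<Longrightarrow> r0 \<le> edist n d a"
      using compactin_Int_A_dist_bounded_below[OF K] by blast
    moreover obtain r where "r \<in> \<rat>" "0 < r" "r < r0"
      using Rats_dense_in_real \<open>0 < r0\<close> by blast
    ultimately show "d \<in> (\<Union>r\<in>\<rat> \<inter> {0<..}. ?D r)"
      using d by (intro UN_I[of r]) fastforce+
  qed
  moreover have "countable (\<Union>r\<in>\<rat> \<inter> {0<..}. ?D r)"
  proof (rule countable_UN)
    show "countable (\<rat> \<inter> {0<..})"
      using countable_rat by (rule countable_Int1)
    show "countable (?D r)" if "r \<in> \<rat> \<inter> {0<..}" for r
      using finite_far_points[OF K] that by (intro countable_finite) auto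
  qed
  ultimately show ?thesis
    by (rule countable_subset)
qed

lemma Ball_n_Int_Xn_subset_basic_nbhd:
  assumes "x \<in> Xn n" "x \<notin> Ln n - A" "0 < e"
  obtains \<delta> where "0 < \<delta>" "Ball_n n x \<delta> \<inter> Xn n \<subseteq> basic_nbhd x e"
  using assms(1)
proof (cases rule: Xn_cases)
  case Pn
  then have "0 < min e (x (n - 1) / 2)"
    using assms(3) by (simp add: Pn_def)
  with Pn show ?thesis
    by (intro that[of "min e (x (n - 1) / 2)"]) (auto simp: basic_nbhd_def)
next
  case A
  with assms(3) show ?thesis
    by (intro that[of e]) (auto simp: basic_nbhd_def)
next
  case L
  with assms(2) show ?thesis
    by blast
qed

definition rational_base :: "(nat \<Rightarrow> real) set set" where
  "rational_base =
     (\<lambda>(q, r). Ball_n n q r \<inter> Xn n) ` (rat_points n \<times> \<rat>)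
     \<union> (\<lambda>(d, r). tildeBall n d r) ` ((Ln n - A) \<times> (\<rat> \<inter> {0<..}))"

lemma rational_base_refines_openin:
  assumes "openin (tau n A) U" "x \<in> U"
  shows "\<exists>V\<in>rational_base. x \<in> V \<and> V \<subseteq> U"
proof -
  obtain e where "x \<in> Xn n" "0 < e" and e: "basic_nbhd x e \<subseteq> U"
    using assms unfolding openin_tau_iff by blast
  show ?thesis
  proof (cases "x \<in> Ln n - A")
    case True
    obtain r where r: "r \<in> \<rat>" "0 < r" "r < e"
      using Rats_dense_in_real \<open>0 < e\<close> by blast
    with True have "tildeBall n x r \<in> rational_base"
      unfolding rational_base_def by blast
    moreover have "basic_nbhd x r = tildeBall n x r"
      using True by (simp add: basic_nbhd_def Ln_def Pn_def)
    moreover have "basic_nbhd x r \<subseteq> U"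
      using basic_nbhd_mono[OF \<open>x \<in> Xn n\<close> \<open>0 < r\<close>, of e] r(3) e by simp
    ultimately show ?thesis
      using centre_in_basic_nbhd[OF \<open>x \<in> Xn n\<close> \<open>0 < r\<close>] by metis
  next
    case False
    then obtain \<delta> where "0 < \<delta>" and \<delta>: "Ball_n n x \<delta> \<inter> Xn n \<subseteq> basic_nbhd x e"
      using Ball_n_Int_Xn_subset_basic_nbhd \<open>x \<in> Xn n\<close> \<open>0 < e\<close> by blast
    have "x \<in> Rn n"
      using \<open>x \<in> Xn n\<close> by (auto simp: Xn_def Pn_def Ln_def)
    then obtain q r where "q \<in> rat_points n" "r \<in> \<rat>" "x \<in> Ball_n n q r"
      and "Ball_n n q r \<subseteq> Ball_n n x \<delta>"
      using rat_Ball_n_between \<open>0 < \<delta>\<close> by blast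
    moreover have "Ball_n n q r \<inter> Xn n \<in> rational_base"
      using \<open>q \<in> rat_points n\<close> \<open>r \<in> \<rat>\<close> unfolding rational_base_def by blast
    ultimately show ?thesis
      using \<open>x \<in> Xn n\<close> \<delta> e by blast
  qed
qed

lemma second_countable_tau_if_countable:
  assumes "countable (Ln n - A)"
  shows "second_countable (tau n A)"
  unfolding second_countable_def
proof (intro exI[of _ rational_base] conjI)
  show "countable rational_base"
    unfolding rational_base_def using countable_rat_points countable_rat assms
    by (intro countable_Un countable_image countable_SIGMA) auto
  show "\<forall>V\<in>rational_base. openin (tau n A) V"
    unfolding rational_base_def using openin_Ball_n_Int_Xn openin_tildeBall by auto
  show "\<forall>U x. openin (tau n A) U \<and> x \<in> U \<longrightarrow> (\<exists>V\<in>rational_base. x \<in> V \<and> V \<subseteq> U)"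
    using rational_base_refines_openin by blast
qed

end

end

theorem mainTheorem15:
  fixes n :: nat and A :: "(nat \<Rightarrow> real) set"
  assumes "n \<ge> 2" and "A \<subseteq> Ln n"
    and "sigma_compact_space (tau n A)"
  shows "second_countable (tau n A)"
proof -
  have n_pos: "0 < n"
    using assms(1) by simp
  obtain \<K> where \<K>: "countable \<K>" "\<forall>K\<in>\<K>. compactin (tau n A) K" "\<Union>\<K> = topspace (tau n A)"
    using assms(3) unfolding sigma_compact_space_def by auto
  have "Ln n - A \<subseteq> (\<Union>K\<in>\<K>. K \<inter> (Ln n - A))"
  proof
    fix x
    assume x: "x \<in> Ln n - A"
    then have "x \<in> \<Union>\<K>"
      using \<K>(3) topspace_tau[OF n_pos assms(2)] Ln_subset_Xn[of n] by auto
    with x show "x \<in> (\<Union>K\<in>\<K>. K \<inter> (Ln n - A))"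
      by auto
  qed
  moreover have "countable (\<Union>K\<in>\<K>. K \<inter> (Ln n - A))"
    using \<K>(1,2) countable_compactin_Int_Ln_minus_A[OF n_pos assms(2)] by (intro countable_UN) auto
  ultimately have "countable (Ln n - A)"
    by (rule countable_subset)
  then show ?thesis
    by (rule second_countable_tau_if_countable[OF n_pos assms(2)])
qed

end
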